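(* Let $u_0\in H^1(\mathbb S)$ with $h=\int_{\mathbb S}u_{0x}^2\neq1$, and let $u$ be a global admissible conservative weak solution with initial datum $u_0$ (defined below). For each $t\ge0$ and $\beta\in\mathbb R$, define $y(t,\beta)$ implicitly by $$y(t,\beta)+\int_0^{y(t,\beta)}u_x^2(t,z)\,dz=(1+h)\beta.$$ Then, for every $t\ge0$, the maps $\beta\mapsto y(t,\beta)$ and $\beta\mapsto u(t,y(t,\beta))$ are Lipschitz continuous with constant $1+h$.
   Context: $\mathbb S=\mathbb R/\mathbb Z$. For $w$ on $\mathbb S$ write - $\overline w=\int_{\mathbb S}w$; - $\mathbb Pw=w-\overline w$; - $\partial_x^{-1}w(x)=\int_0^x\mathbb Pw$. Test functions $\psi\in C_0^\infty(\mathbb R^+;\mathcal D(\mathbb S))$ are smooth, 1-periodic in $x$, and compactly supported in $t\in[0,\infty)$. Also $$f(t)=\frac{1}{1-h}\int_{\mathbb S}(1-u_x^2)\,\partial_x^{-1}(u-uu_x^2)\,dy.$$ A function $u\in L^\infty(\mathbb R^+;H^1(\mathbb S))$ is a global admissible conservative weak solution if all of the following hold for all test functions $\psi$. (i) $$\iint(u\psi_{tx}+u^2u_x\psi_x)=\iint\big(u-uu_x^2-\overline{u-uu_x^2}\big)\psi+\int_{\mathbb S}u_{0x}\psi(0,\cdot).$$ (ii) $$\iint(u\psi_t-\tfrac13u^3\psi_x)=-\iint\big(\partial_x^{-1}(u-uu_x^2)-f(t)\big)\psi-\int_{\mathbb S}u_0\psi(0,\cdot).$$ (iii) $\int_{\mathbb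 S}u_x^2$ and $\int_{\mathbb S}(u-uu_x^2)$ are constant in time. (iv) $$\iint(u_x^2\psi_t-u^2u_x^2\psi_x)=-\iint\big((u^2)_x-2u_x\overline{u-uu_x^2}\big)\psi-\int_{\mathbb S}u_{0x}^2\psi(0,\cdot).$$ Here all double integrals are over $\mathbb R^+\times\mathbb S$. *)

theory Defs
  imports "HOL-Analysis.Analysis"
begin

text \<open>Functions on the circle S = R/Z are represented as 1-periodic functions on R.
  Space-time functions are curried: u t x.\<close>

text \<open>H^1(S): v is the (continuous) absolutely continuous representative with weak derivative vx,
  vx square integrable over one period.\<close>
definition H1rep :: "(real \<Rightarrow> real) \<Rightarrow> (real \<Rightarrow> real) \<Rightarrow> bool" where
  "H1rep v vx \<longleftrightarrow> (\<forall>x. v (x + 1) = v x) \<and> (\<forall>x. vx (x + 1) = vx x) \<and>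
     vx \<in> borel_measurable lborel \<and>
     set_integrable lborel {0..1} (\<lambda>x. (vx x)^2) \<and>
     (\<forall>x. v x = v 0 + (LBINT z=ereal 0..ereal x. vx z))"

definition cmean :: "(real \<Rightarrow> real) \<Rightarrow> real" where
  "cmean w = (LBINT x:{0..1}. w x)"

definition Pproj :: "(real \<Rightarrow> real) \<Rightarrow> real \<Rightarrow> real" where
  "Pproj w x = w x - cmean w"

definition dxinv :: "(real \<Rightarrow> real) \<Rightarrow> real \<Rightarrow> real" where
  "dxinv w x = (LBINT y=ereal 0..ereal x. Pproj w y)"

definition pt :: "(real \<Rightarrow> real \<Rightarrow> real) \<Rightarrow> real \<Rightarrow> real \<Rightarrow> real" where
  "pt \<psi> t x = deriv (\<lambda>s. \<psi> s x) t"

definition px :: "(real \<Rightarrow> real \<Rightarrow> real) \<Rightarrow> real \<Rightarrow> real \<Rightarrow> real" where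
  "px \<psi> t x = deriv (\<lambda>y. \<psi> t y) x"

fun dop :: "bool list \<Rightarrow> (real \<Rightarrow> real \<Rightarrow> real) \<Rightarrow> real \<Rightarrow> real \<Rightarrow> real" where
  "dop [] \<psi> = \<psi>"
| "dop (b # bs) \<psi> = (if b then pt (dop bs \<psi>) else px (dop bs \<psi>))"

definition smooth2 :: "(real \<Rightarrow> real \<Rightarrow> real) \<Rightarrow> bool" where
  "smooth2 \<psi> \<longleftrightarrow> (\<forall>bs. continuous_on UNIV (\<lambda>p::real\<times>real. dop bs \<psi> (fst p) (snd p)) \<and>
      (\<forall>t x. (\<lambda>s. dop bs \<psi> s x) differentiable (at t) \<and> (\<lambda>y. dop bs \<psi> t y) differentiable (at x)))"

definition test_fn :: "(real \<Rightarrow> real \<Rightarrow> real) \<Rightarrow> bool" where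
  "test_fn \<psi> \<longleftrightarrow> smooth2 \<psi> \<and> (\<forall>t x. \<psi> t (x + 1) = \<psi> t x) \<and> (\<exists>T. \<forall>t\<ge>T. \<forall>x. \<psi> t x = 0)"

definition iint :: "(real \<Rightarrow> real \<Rightarrow> real) \<Rightarrow> real" where
  "iint F = set_lebesgue_integral lborel ({0..} \<times> {0..1}) (\<lambda>p::real\<times>real. F (fst p) (snd p))"

definition sint :: "(real \<Rightarrow> real) \<Rightarrow> real" where
  "sint w = (LBINT x:{0..1}. w x)"

definition wfun :: "(real \<Rightarrow> real \<Rightarrow> real) \<Rightarrow> (real \<Rightarrow> real \<Rightarrow> real) \<Rightarrow> real \<Rightarrow> real \<Rightarrow> real" where
  "wfun u ux t y = u t y - u t y * (ux t y)^2"

definition ffun :: "real \<Rightarrow> (real \<Rightarrow> real \<Rightarrow> real) \<Rightarrow> (real \<Rightarrow> real \<Rightarrow> real) \<Rightarrow> real \<Rightarrow> real" where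
  "ffun h u ux t = 1 / (1 - h) * sint (\<lambda>y. (1 - (ux t y)^2) * dxinv (wfun u ux t) y)"

text \<open>Global admissible conservative weak solution u (with weak x-derivative ux)
  for initial datum u0 (with derivative u0x).\<close>
definition gacws :: "(real \<Rightarrow> real \<Rightarrow> real) \<Rightarrow> (real \<Rightarrow> real \<Rightarrow> real) \<Rightarrow> (real \<Rightarrow> real) \<Rightarrow> (real \<Rightarrow> real) \<Rightarrow> bool" where
  "gacws u ux u0 u0x \<longleftrightarrow>
    (let h = sint (\<lambda>x. (u0x x)^2) in
    \<comment> \<open>u \<in> L^\<infinity>(R^+; H^1(S))\<close>
    (\<lambda>p::real\<times>real. u (fst p) (snd p)) \<in> borel_measurable lborel \<and>
    (\<lambda>p::real\<times>real. ux (fst p) (snd p)) \<in> borel_measurable lborel \<and>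
    (\<forall>t\<ge>0. H1rep (u t) (ux t)) \<and>
    (\<exists>M. \<forall>t\<ge>0. sint (\<lambda>x. (u t x)^2 + (ux t x)^2) \<le> M) \<and>
    \<comment> \<open>(i)\<close>
    (\<forall>\<psi>. test_fn \<psi> \<longrightarrow>
       iint (\<lambda>t x. u t x * pt (px \<psi>) t x + (u t x)^2 * ux t x * px \<psi> t x)
       = iint (\<lambda>t x. (wfun u ux t x - cmean (wfun u ux t)) * \<psi> t x)
         + sint (\<lambda>x. u0x x * \<psi> 0 x)) \<and>
    \<comment> \<open>(ii)\<close>
    (\<forall>\<psi>. test_fn \<psi> \<longrightarrow>
       iint (\<lambda>t x. u t x * pt \<psi> t x - 1/3 * (u t x)^3 * px \<psi> t x)
       = - iint (\<lambda>t x. (dxinv (wfun u ux t) x - ffun h u ux t) * \<psi> t x)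
         - sint (\<lambda>x. u0 x * \<psi> 0 x)) \<and>
    \<comment> \<open>(iii)\<close>
    (\<forall>t\<ge>0. \<forall>s\<ge>0. sint (\<lambda>x. (ux t x)^2) = sint (\<lambda>x. (ux s x)^2)) \<and>
    (\<forall>t\<ge>0. \<forall>s\<ge>0. sint (wfun u ux t) = sint (wfun u ux s)) \<and>
    \<comment> \<open>(iv)\<close>
    (\<forall>\<psi>. test_fn \<psi> \<longrightarrow>
       iint (\<lambda>t x. (ux t x)^2 * pt \<psi> t x - (u t x)^2 * (ux t x)^2 * px \<psi> t x)
       = - iint (\<lambda>t x. (2 * u t x * ux t x - 2 * ux t x * cmean (wfun u ux t)) * \<psi> t x)
         - sint (\<lambda>x. (u0x x)^2 * \<psi> 0 x)))"

definition ychar :: "real \<Rightarrow> (real \<Rightarrow> real \<Rightarrow> real) \<Rightarrow> real \<Rightarrow> real \<Rightarrow> real" where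
  "ychar h ux t \<beta> = (THE y. y + (LBINT z=ereal 0..ereal y. (ux t z)^2) = (1 + h) * \<beta>)"

end

theory Submission
  imports Defs "HOL-Library.Periodic_Fun"
begin

text \<open>Let \<open>F y = y + \<integral>\<^sub>0\<^sup>y u\<^sub>x\<^sup>2\<close> at a fixed time. Then
  \<open>F b - F a = (b - a) + \<integral>\<^sub>a\<^sup>b u\<^sub>x\<^sup>2 \<ge> b - a\<close>, and since \<open>\<bar>u\<^sub>x\<bar> \<le> 1 + u\<^sub>x\<^sup>2\<close> also
  \<open>\<bar>u b - u a\<bar> \<le> F b - F a\<close>. Being continuous and expanding, \<open>F\<close> is a bijection of
  the line and \<open>y(t,\<beta>) = F\<^sup>-\<^sup>1((1 + h)\<beta>)\<close>, so both maps move by at most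
  \<open>\<bar>F(y(t,\<beta>\<^sub>1)) - F(y(t,\<beta>\<^sub>2))\<bar> = (1 + h)\<bar>\<beta>\<^sub>1 - \<beta>\<^sub>2\<bar>\<close>. Only the \<open>H\<^sup>1\<close>
  regularity of \<open>u(t)\<close> and \<open>h \<ge> 0\<close> enter.\<close>

lemma set_integrable_periodic:
  fixes f :: "real \<Rightarrow> real"
  assumes periodic: "\<And>x. f (x + 1) = f x" and unit: "set_integrable lborel {0..1} f"
  shows "set_integrable lborel {a..b} f"
proof -
  interpret periodic_fun_simple' f by unfold_locales (rule periodic)
  have shifted_unit: "set_integrable lborel {of_int n..of_int n + 1} f" for n :: int
  proof -
    let ?F = "\<lambda>x. indicator {of_int n..of_int n + 1} x *\<^sub>R f x"
    have "(\<lambda>x. ?F (of_int n + 1 * x)) = (\<lambda>x. indicator {0..1} x *\<^sub>R f x)"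
      using plus_of_int by (auto simp: indicator_def add.commute)
    then show ?thesis
      using unit lborel_integrable_real_affine_iff[of 1 ?F "of_int n"]
      by (simp add: set_integrable_def)
  qed
  have "{a..b} \<subseteq> (\<Union>n\<in>{\<lfloor>a\<rfloor>..\<lceil>b\<rceil>}. {of_int n..of_int n + 1})"
  proof
    fix x assume "x \<in> {a..b}"
    then have "\<lfloor>x\<rfloor> \<in> {\<lfloor>a\<rfloor>..\<lceil>b\<rceil>}"
      by (auto intro: floor_mono order_trans[OF floor_le_ceiling ceiling_mono])
    moreover have "x \<in> {of_int \<lfloor>x\<rfloor>..of_int \<lfloor>x\<rfloor> + 1}" by (simp add: less_imp_le)
    ultimately show "x \<in> (\<Union>n\<in>{\<lfloor>a\<rfloor>..\<lceil>b\<rceil>}. {of_int n..of_int n + 1})" by blast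
  qed
  moreover have "set_integrable lborel (\<Union>n\<in>{\<lfloor>a\<rfloor>..\<lceil>b\<rceil>}. {of_int n..of_int n + 1::real}) f"
    by (rule set_integrable_UN) (auto intro: shifted_unit)
  ultimately show ?thesis by (auto intro: set_integrable_subset)
qed

lemma interval_integral_0_diff:
  fixes k :: "real \<Rightarrow> real"
  assumes local_int: "\<And>a b. set_integrable lborel {a..b} k" and "a \<le> b"
  shows "(LBINT z=ereal 0..ereal b. k z) - (LBINT z=ereal 0..ereal a. k z) = (LBINT z:{a..b}. k z)"
proof -
  have "interval_lebesgue_integrable lborel (ereal c) (ereal d) k" for c d
    unfolding interval_lebesgue_integrable_def einterval_def
    using local_int by (auto intro: set_integrable_subset[of _ "{min c d..max c d}"])
  then have "(LBINT z=ereal a..ereal 0. k z) + (LBINT z=ereal 0..ereal b. k z) = (LBINT z=ereal a..ereal b. k z)"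
    by (intro interval_integral_sum) (simp add: min_def max_def)
  then show ?thesis
    using interval_integral_endpoints_reverse[of "ereal a" "ereal 0" k] interval_integral_Icc[OF \<open>a \<le> b\<close>] by simp
qed

lemma abs_le_1_plus_square: "\<bar>x::real\<bar> \<le> 1 + x\<^sup>2"
proof -
  have "0 \<le> (\<bar>x\<bar> - 1)\<^sup>2" by simp
  then show ?thesis by (simp add: power2_eq_square algebra_simps abs_mult_self_eq)
qed

lemma expanding_continuous_THE:
  fixes F :: "real \<Rightarrow> real"
  assumes cont: "continuous_on UNIV F" and expanding: "\<And>a b. a \<le> b \<Longrightarrow> b - a \<le> F b - F a"
  shows "F (THE y. F y = d) = d"
proof (rule theI')
  define N where "N = \<bar>d - F 0\<bar>"
  have "F (-N) \<le> d" "d \<le> F N" "-N \<le> N"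
    using expanding[of "-N" 0] expanding[of 0 N] by (auto simp: N_def)
  then obtain y where "F y = d"
    using IVT'[of F] continuous_on_subset[OF cont] by blast
  moreover have "x = y" if "F x = F y" for x y
    using expanding[of x y] expanding[of y x] that by linarith
  ultimately show "\<exists>!y. F y = d" by blast
qed

lemma lipschitz_on_comp_expanding_inverse:
  fixes F v Y :: "real \<Rightarrow> real"
  assumes dominated: "\<And>a b. a \<le> b \<Longrightarrow> \<bar>v b - v a\<bar> \<le> F b - F a"
    and inverse: "\<And>\<beta>. F (Y \<beta>) = c * \<beta>" and "0 \<le> c"
  shows "c-lipschitz_on UNIV (\<lambda>\<beta>. v (Y \<beta>))"
proof (rule lipschitz_onI)
  fix \<beta>1 \<beta>2 :: real
  have "\<bar>v (Y \<beta>1) - v (Y \<beta>2)\<bar> \<le> \<bar>F (Y \<beta>1) - F (Y \<beta>2)\<bar>"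
    using dominated[of "Y \<beta>1" "Y \<beta>2"] dominated[of "Y \<beta>2" "Y \<beta>1"] by linarith
  also have "\<dots> = c * \<bar>\<beta>1 - \<beta>2\<bar>"
    using \<open>0 \<le> c\<close> by (simp add: inverse abs_mult flip: right_diff_distrib)
  finally show "dist (v (Y \<beta>1)) (v (Y \<beta>2)) \<le> c * dist \<beta>1 \<beta>2"
    by (simp add: dist_real_def)
qed (rule \<open>0 \<le> c\<close>)

definition stretch :: "(real \<Rightarrow> real) \<Rightarrow> real \<Rightarrow> real" where
  "stretch g y = y + (LBINT z=ereal 0..ereal y. (g z)\<^sup>2)"

context
  fixes g :: "real \<Rightarrow> real"
  assumes g_measurable: "g \<in> borel_measurable lborel"
    and square_int: "\<And>a b. set_integrable lborel {a..b} (\<lambda>z. (g z)\<^sup>2)"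
begin

lemma stretch_diff:
  assumes "a \<le> b"
  shows "stretch g b - stretch g a = (b - a) + (LBINT z:{a..b}. (g z)\<^sup>2)"
  using interval_integral_0_diff[OF square_int assms] by (simp add: stretch_def)

lemma stretch_expanding:
  assumes "a \<le> b"
  shows "b - a \<le> stretch g b - stretch g a"
proof -
  have "0 \<le> (LBINT z:{a..b}. (g z)\<^sup>2)"
    unfolding set_lebesgue_integral_def by (intro Bochner_Integration.integral_nonneg) simp
  then show ?thesis using stretch_diff[OF assms] by simp
qed

lemma continuous_on_stretch: "continuous_on UNIV (stretch g)"
proof -
  have "isCont (stretch g) x" for x
  proof -
    define N where "N = \<bar>x\<bar> + 1"
    have "continuous_on {-N..N}
        (\<lambda>y. stretch g (-N) + (y + N) + integral {-N..y} (\<lambda>z. (g z)\<^sup>2))"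
      using set_borel_integral_eq_integral(1)[OF square_int]
      by (intro continuous_intros indefinite_integral_continuous_1)
    then have "continuous_on {-N..N} (stretch g)"
    proof (rule continuous_on_eq)
      fix y assume "y \<in> {-N..N}"
      then show "stretch g (-N) + (y + N) + integral {-N..y} (\<lambda>z. (g z)\<^sup>2) = stretch g y"
        using stretch_diff[of "-N" y] set_borel_integral_eq_integral(2)[OF square_int] by simp
    qed
    moreover have "x \<in> interior {-N..N}"
      using abs_ge_self[of x] abs_ge_minus_self[of x] by (simp add: N_def)
    ultimately show ?thesis by (rule continuous_on_interior)
  qed
  then show ?thesis by (simp add: continuous_on_eq_continuous_at)
qed

lemma stretch_THE: "stretch g (THE y. stretch g y = d) = d"
  using continuous_on_stretch stretch_expanding by (rule expanding_continuous_THE)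

lemma stretch_dominates_primitive:
  assumes primitive: "\<And>x. v x = v 0 + (LBINT z=ereal 0..ereal x. g z)" and "a \<le> b"
  shows "\<bar>v b - v a\<bar> \<le> stretch g b - stretch g a"
proof -
  have one_int: "set_integrable lborel {a..b} (\<lambda>_. 1::real)" for a b :: real
    by (rule borel_integrable_atLeastAtMost') simp
  have bound_int: "set_integrable lborel {a..b} (\<lambda>z. 1 + (g z)\<^sup>2)" for a b :: real
    using one_int square_int by (rule set_integral_add)
  have g_int: "set_integrable lborel {a..b} g" for a b
  proof (rule set_integrable_bound[OF bound_int])
    show "set_borel_measurable lborel {a..b} g"
      unfolding set_borel_measurable_def using g_measurable by measurable
    show "AE x in lborel. x \<in> {a..b} \<longrightarrow> norm (g x) \<le> norm (1 + (g x)\<^sup>2)"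
      using abs_le_1_plus_square by (intro AE_I2) (simp add: add_nonneg_nonneg)
  qed
  have "v b - v a = (LBINT z:{a..b}. g z)"
    using interval_integral_0_diff[OF g_int \<open>a \<le> b\<close>] primitive[of a] primitive[of b] by simp
  also have "\<bar>\<dots>\<bar> \<le> (LBINT z:{a..b}. \<bar>g z\<bar>)"
    using set_integral_norm_bound[OF g_int] by simp
  also have "\<dots> \<le> (LBINT z:{a..b}. 1 + (g z)\<^sup>2)"
    using set_integrable_abs[OF g_int] bound_int abs_le_1_plus_square by (rule set_integral_mono)
  also have "\<dots> = stretch g b - stretch g a"
    using stretch_diff[OF \<open>a \<le> b\<close>] set_integral_add(2)[OF one_int square_int] \<open>a \<le> b\<close>
    by (simp add: set_integral_const)
  finally show ?thesis .
qed

lemma lipschitz_on_inverse_stretch: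
  assumes "0 \<le> c"
  shows "c-lipschitz_on UNIV (\<lambda>\<beta>. THE y. stretch g y = c * \<beta>)"
    and "(\<And>x. v x = v 0 + (LBINT z=ereal 0..ereal x. g z))
      \<Longrightarrow> c-lipschitz_on UNIV (\<lambda>\<beta>. v (THE y. stretch g y = c * \<beta>))"
proof -
  show "c-lipschitz_on UNIV (\<lambda>\<beta>. THE y. stretch g y = c * \<beta>)"
  proof (rule lipschitz_on_comp_expanding_inverse[where v = "\<lambda>y. y"])
    show "\<bar>b - a\<bar> \<le> stretch g b - stretch g a" if "a \<le> b" for a b
      using stretch_expanding[OF that] that by simp
  qed (simp_all add: stretch_THE assms)
  show "c-lipschitz_on UNIV (\<lambda>\<beta>. v (THE y. stretch g y = c * \<beta>))"
    if "\<And>x. v x = v 0 + (LBINT z=ereal 0..ereal x. g z)"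
    using stretch_dominates_primitive[OF that] stretch_THE assms
    by (rule lipschitz_on_comp_expanding_inverse)
qed

end

lemma H1rep_square_set_integrable:
  assumes "H1rep v g"
  shows "set_integrable lborel {a..b} (\<lambda>z. (g z)\<^sup>2)"
proof (rule set_integrable_periodic)
  show "(g (x + 1))\<^sup>2 = (g x)\<^sup>2" for x
    using assms unfolding H1rep_def by simp
  show "set_integrable lborel {0..1} (\<lambda>z. (g z)\<^sup>2)"
    using assms unfolding H1rep_def by blast
qed

theorem lemma5p4:
  fixes u ux :: "real \<Rightarrow> real \<Rightarrow> real" and u0 u0x :: "real \<Rightarrow> real" and h :: real
  assumes "H1rep u0 u0x"
    and "h = sint (\<lambda>x. (u0x x)^2)"
    and "h \<noteq> 1"
    and "gacws u ux u0 u0x"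
    and "t \<ge> 0"
  shows "(1 + h)-lipschitz_on UNIV (\<lambda>\<beta>. ychar h ux t \<beta>)
       \<and> (1 + h)-lipschitz_on UNIV (\<lambda>\<beta>. u t (ychar h ux t \<beta>))"
proof -
  have H1: "H1rep (u t) (ux t)"
    using assms(4,5) unfolding gacws_def Let_def by blast
  then have ux_measurable: "ux t \<in> borel_measurable lborel"
    and primitive: "\<And>x. u t x = u t 0 + (LBINT z=ereal 0..ereal x. ux t z)"
    unfolding H1rep_def by blast+
  have "0 \<le> h"
    unfolding assms(2) sint_def set_lebesgue_integral_def
    by (intro Bochner_Integration.integral_nonneg) simp
  then have "0 \<le> 1 + h" by simp
  note lipschitz = lipschitz_on_inverse_stretch[OF ux_measurable H1rep_square_set_integrable[OF H1] this]
  have "ychar h ux t = (\<lambda>\<beta>. THE y. stretch (ux t) y = (1 + h) * \<beta>)"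
    unfolding ychar_def stretch_def ..
  then show ?thesis
    using lipschitz(1) lipschitz(2)[OF primitive] by simp
qed

end
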